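(* Let $a,\alpha$ be real numbers with $-1<\alpha<a<1$. Then the solutions $\beta,b$ of the equation $$x^2+(a+\alpha)x+\frac{(a-\alpha)^2}{1-a\alpha}-3=0$$ are real, and, labeling them so that $\beta\le b$, one has $\beta<-1$ and $b>1$. *)

theory Defs
  imports "HOL-Analysis.Analysis"
begin

end

theory Submission
  imports Defs
begin

text \<open>A monic real quadratic that is negative at both \<open>1\<close> and \<open>-1\<close> has a positive
  discriminant, and its two real roots lie on either side of \<open>[-1, 1]\<close>. So it suffices to
  check \<open>f(\<plusminus>1) < 0\<close> for \<open>f(x) = x\<^sup>2 + (a + \<alpha>) x + (a - \<alpha>)\<^sup>2 / (1 - a \<alpha>) - 3\<close>; clearing the
  positive denominator \<open>1 - a \<alpha>\<close>, this reduces to the factorizations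
  \<open>(2 \<mp> (a + \<alpha>)) (1 - a \<alpha>) - (a - \<alpha>)\<^sup>2 = (1 \<mp> a) (1 \<mp> \<alpha>) (2 \<plusminus> (a + \<alpha>))\<close>.\<close>

lemma complex_quadratic_eq_0_iff_real_roots:
  fixes p q \<beta> b :: real
  assumes "\<beta> + b = -p" and "\<beta> * b = q"
  shows "z\<^sup>2 + of_real p * z + of_real q = 0 \<longleftrightarrow> z = of_real \<beta> \<or> z = (of_real b :: complex)"
proof -
  have "p = - (\<beta> + b)" and "q = \<beta> * b"
    using assms by simp_all
  then have "z\<^sup>2 + of_real p * z + of_real q = (z - of_real \<beta>) * (z - of_real b)"
    by (simp only:) (simp add: algebra_simps power2_eq_square)
  then show ?thesis
    by simp
qed

lemma monic_quadratic_roots_outside_unit_interval: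
  fixes p q :: real
  assumes at_1: "1 + p + q < 0" and at_minus_1: "1 - p + q < 0"
  shows "\<exists>\<beta> b :: real. \<beta> \<le> b \<and>
     (\<forall>z :: complex. z\<^sup>2 + complex_of_real p * z + complex_of_real q = 0
        \<longleftrightarrow> z = complex_of_real \<beta> \<or> z = complex_of_real b) \<and>
     \<beta> < -1 \<and> 1 < b"
proof -
  define s where "s = sqrt (p\<^sup>2 - 4 * q)"
  have "p\<^sup>2 - 4 * q > 0"
    using at_1 at_minus_1 zero_le_power2[of p] by linarith
  then have "s > 0" and s_sq: "s * s = p\<^sup>2 - 4 * q"
    by (auto simp: s_def)
  define \<beta> b where "\<beta> = (- p - s) / 2" and "b = (- p + s) / 2"
  have sum: "\<beta> + b = -p" and prod: "\<beta> * b = q"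
    using s_sq by (auto simp: \<beta>_def b_def field_simps power2_eq_square)
  have factor: "x\<^sup>2 + p * x + q = (x - \<beta>) * (x - b)" for x :: real
  proof -
    have "x\<^sup>2 + p * x + q - (x - \<beta>) * (x - b) = (p + \<beta> + b) * x + (q - \<beta> * b)"
      by (simp add: algebra_simps power2_eq_square)
    also have "\<dots> = 0"
      using sum prod by simp
    finally show ?thesis
      by simp
  qed
  have "\<beta> \<le> b"
    using \<open>s > 0\<close> by (simp add: \<beta>_def b_def)
  moreover have "(1 - \<beta>) * (1 - b) < 0"
    using factor[of 1] at_1 by simp
  then have "1 < b"
    using \<open>\<beta> \<le> b\<close> mult_nonneg_nonneg[of "1 - \<beta>" "1 - b"] mult_nonneg_nonneg[of "\<beta> - 1" "b - 1"]
    by (cases "1 < b") (auto simp: algebra_simps)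
  moreover have "(-1 - \<beta>) * (-1 - b) < 0"
    using factor[of "-1"] at_minus_1 by simp
  then have "\<beta> < -1"
    using \<open>\<beta> \<le> b\<close> mult_nonneg_nonneg[of "-1 - \<beta>" "-1 - b"] mult_nonneg_nonneg[of "\<beta> + 1" "b + 1"]
    by (cases "\<beta> < -1") (auto simp: algebra_simps)
  ultimately show ?thesis
    using complex_quadratic_eq_0_iff_real_roots[OF sum prod] by blast
qed

lemma quadratic_neg_at_plus_minus_1:
  fixes a \<alpha> :: real
  assumes "-1 < \<alpha>" and "\<alpha> < a" and "a < 1"
  shows "1 + (a + \<alpha>) + ((a - \<alpha>)\<^sup>2 / (1 - a * \<alpha>) - 3) < 0"
    and "1 - (a + \<alpha>) + ((a - \<alpha>)\<^sup>2 / (1 - a * \<alpha>) - 3) < 0"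
proof -
  have "\<bar>a\<bar> < 1" and "\<bar>\<alpha>\<bar> < 1"
    using assms by auto
  then have "\<bar>a * \<alpha>\<bar> < 1"
    by (metis abs_mult abs_ge_zero mult_strict_mono' mult_1_left)
  then have denom_pos: "1 - a * \<alpha> > 0"
    by linarith
  have "(2 - (a + \<alpha>)) * (1 - a * \<alpha>) - (a - \<alpha>)\<^sup>2 = (1 - a) * (1 - \<alpha>) * (2 + (a + \<alpha>))"
    and "(2 + (a + \<alpha>)) * (1 - a * \<alpha>) - (a - \<alpha>)\<^sup>2 = (1 + a) * (1 + \<alpha>) * (2 - (a + \<alpha>))"
    by (simp_all add: algebra_simps power2_eq_square)
  moreover have "(1 - a) * (1 - \<alpha>) * (2 + (a + \<alpha>)) > 0"
    and "(1 + a) * (1 + \<alpha>) * (2 - (a + \<alpha>)) > 0"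
    using assms by simp_all
  ultimately have "(a - \<alpha>)\<^sup>2 / (1 - a * \<alpha>) < 2 - (a + \<alpha>)"
    and "(a - \<alpha>)\<^sup>2 / (1 - a * \<alpha>) < 2 + (a + \<alpha>)"
    using denom_pos by (simp_all add: divide_less_eq)
  then show "1 + (a + \<alpha>) + ((a - \<alpha>)\<^sup>2 / (1 - a * \<alpha>) - 3) < 0"
    and "1 - (a + \<alpha>) + ((a - \<alpha>)\<^sup>2 / (1 - a * \<alpha>) - 3) < 0"
    by linarith+
qed

theorem lemma4p2:
  fixes a \<alpha> :: real
  assumes "-1 < \<alpha>" and "\<alpha> < a" and "a < 1"
  shows "\<exists>\<beta> b :: real. \<beta> \<le> b \<and>
     (\<forall>z :: complex. z\<^sup>2 + complex_of_real (a + \<alpha>) * z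
          + complex_of_real ((a - \<alpha>)\<^sup>2 / (1 - a * \<alpha>) - 3) = 0
        \<longleftrightarrow> z = complex_of_real \<beta> \<or> z = complex_of_real b) \<and>
     \<beta> < -1 \<and> 1 < b"
  using monic_quadratic_roots_outside_unit_interval[OF quadratic_neg_at_plus_minus_1[OF assms]] .

end
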